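(* $$f(n,q) \geq q^{2^{n-1}(1+o(1))} \quad \text{as } q\to\infty,\ n\to\infty.$$ That is, there is a function $\epsilon(n,q)$ with $\epsilon(n,q)\to 0$ as $q\to\infty$ and $n\to\infty$ such that $f(n,q) \geq q^{2^{n-1}(1+\epsilon(n,q))}$ for all integers $q\ge 2$ and $n \ge 1$.
   Context: A $q$-ary word is a finite string of characters over an alphabet of $q$ letters; the empty word is $\varepsilon$. $V$ is a subword of $W$ if $W = UVU'$ for some (possibly empty) words $U,U'$. A word $W$ is an instance of a word $V = x_0x_1\cdots x_{m-1}$ (each $x_i$ a letter) if $W = A_0A_1\cdots A_{m-1}$ with each $A_i$ nonempty and $A_i = A_j$ whenever $x_i = x_j$. A word $U$ encounters $V$ if some subword of $U$ is an instance of $V$; otherwise $U$ avoids $V$. The Zimin words are defined by $Z_0 := \varepsilon$ and $Z_{n+1} := Z_n x_n Z_n$ for distinct letters $x_0,x_1,\dots$. For positive integers $n,q$, $f(n,q)$ denotes the smallest integer $M$ such that every $q$-ary word of length $M$ encounters $Z_n$. *)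

theory Defs
  imports Complex_Main
begin

definition qary :: "nat \<Rightarrow> nat list \<Rightarrow> bool" where
  "qary q w \<longleftrightarrow> set w \<subseteq> {..<q}"

definition subword :: "'a list \<Rightarrow> 'a list \<Rightarrow> bool" where
  "subword V W \<longleftrightarrow> (\<exists>U U'. W = U @ V @ U')"

definition instance_of :: "'a list \<Rightarrow> 'b list \<Rightarrow> bool" where
  "instance_of W V \<longleftrightarrow>
     (\<exists>As :: 'a list list. length As = length V \<and>
        (\<forall>i < length V. As ! i \<noteq> []) \<and>
        (\<forall>i < length V. \<forall>j < length V. V ! i = V ! j \<longrightarrow> As ! i = As ! j) \<and>
        W = concat As)"

definition encounters :: "'a list \<Rightarrow> 'b list \<Rightarrow> bool" where
  "encounters U V \<longleftrightarrow> (\<exists>S. subword S U \<and> instance_of S V)"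

fun zimin :: "nat \<Rightarrow> nat list" where
  "zimin 0 = []"
| "zimin (Suc n) = zimin n @ [n] @ zimin n"

definition f :: "nat \<Rightarrow> nat \<Rightarrow> nat" where
  "f n q = (LEAST M. \<forall>w. qary q w \<and> length w = M \<longrightarrow> encounters w (zimin n))"

end

theory Submission imports Defs "HOL-Real_Asymp.Real_Asymp" begin

text \<open>
  An instance of Z_{n+1} is a word A B A with B nonempty and A an instance of Z_n, so A has
  length at least 2^n - 1. Counting by induction on n, at most
  2^n q^L / q^{2^{n+1} - n - 2} q-ary words of length L are instances of Z_{n+1}: the extra
  factor q^{-|A|} summed over |A| \<ge> 2^n - 1 is a geometric series. Choosing the position and
  length of the instance, at most (M+1)^2 2^n q^M / q^{2^{n+1} - n - 2} words of length M
  encounter Z_{n+1}; for M = q^{2^n - n - 2} - 1 this is less than q^M, so some word of length M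
  avoids Z_{n+1} and f(n+1, q) \<ge> q^{2^n - n - 2} = q^{2^n (1 + \<epsilon>)} with
  \<epsilon> = -(n+2)/2^n.

  Since f is defined by LEAST, the argument also needs that Zimin words are unavoidable; this
  follows by pigeonhole: among q^m + 1 disjoint blocks of length m two coincide.
\<close>

lemma length_zimin: "length (zimin n) = 2^n - 1"
proof (induction n)
  case (Suc n)
  have "(1::nat) \<le> 2^n" by simp
  with Suc show ?case by simp
qed simp

lemma set_zimin: "set (zimin n) = {..<n}"
  by (induction n) (simp_all add: lessThan_Suc)

lemma instance_of_iff_concat_map:
  "instance_of W V \<longleftrightarrow> (\<exists>h. (\<forall>x\<in>set V. h x \<noteq> []) \<and> W = concat (map h V))"
proof
  assume "instance_of W V"
  then obtain As where len: "length As = length V" and ne: "\<forall>i<length V. As ! i \<noteq> []"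
    and cons: "\<forall>i<length V. \<forall>j<length V. V ! i = V ! j \<longrightarrow> As ! i = As ! j"
    and W: "W = concat As"
    unfolding instance_of_def by blast
  define h where "h x = As ! (SOME i. i < length V \<and> V ! i = x)" for x
  have h_nth: "h (V ! i) = As ! i" if "i < length V" for i
  proof -
    have "\<exists>j. j < length V \<and> V ! j = V ! i" using that by blast
    then have "(SOME j. j < length V \<and> V ! j = V ! i) < length V \<and>
               V ! (SOME j. j < length V \<and> V ! j = V ! i) = V ! i"
      by (rule someI_ex)
    with cons that show ?thesis unfolding h_def by metis
  qed
  then have "map h V = As" by (simp add: len list_eq_iff_nth_eq)
  with ne W show "\<exists>h. (\<forall>x\<in>set V. h x \<noteq> []) \<and> W = concat (map h V)"
    by (metis in_set_conv_nth h_nth)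
next
  assume "\<exists>h. (\<forall>x\<in>set V. h x \<noteq> []) \<and> W = concat (map h V)"
  then obtain h where "\<forall>x\<in>set V. h x \<noteq> []" "W = concat (map h V)" by blast
  then show "instance_of W V"
    unfolding instance_of_def by (intro exI[of _ "map h V"]) auto
qed

lemma instance_of_length_le:
  assumes "instance_of W V"
  shows "length V \<le> length W"
proof -
  obtain h where ne: "\<forall>x\<in>set V. h x \<noteq> []" and W: "W = concat (map h V)"
    using assms unfolding instance_of_iff_concat_map by blast
  have "length V \<le> length (concat (map h V))"
    using ne
  proof (induction V)
    case (Cons x V)
    then show ?case by (cases "h x") auto
  qed simp
  with W show ?thesis by simp
qed

lemma instance_of_zimin_Suc_iff:
  "instance_of W (zimin (Suc n)) \<longleftrightarrow> (\<exists>A B. W = A @ B @ A \<and> B \<noteq> [] \<and> instance_of A (zimin n))"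
proof
  assume "instance_of W (zimin (Suc n))"
  then obtain h where ne: "\<forall>x\<in>{..<Suc n}. h x \<noteq> []" and W: "W = concat (map h (zimin (Suc n)))"
    unfolding instance_of_iff_concat_map set_zimin by blast
  have "instance_of (concat (map h (zimin n))) (zimin n)"
    unfolding instance_of_iff_concat_map set_zimin using ne by (intro exI[of _ h]) simp
  moreover have "h n \<noteq> []" using ne by simp
  ultimately show "\<exists>A B. W = A @ B @ A \<and> B \<noteq> [] \<and> instance_of A (zimin n)"
    using W by auto
next
  assume "\<exists>A B. W = A @ B @ A \<and> B \<noteq> [] \<and> instance_of A (zimin n)"
  then obtain B h where B: "B \<noteq> []" and ne: "\<forall>x\<in>{..<n}. h x \<noteq> []"
    and W: "W = concat (map h (zimin n)) @ B @ concat (map h (zimin n))"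
    unfolding instance_of_iff_concat_map set_zimin by blast
  \<comment> \<open>the letter n does not occur in zimin n, so h may be redefined there\<close>
  have map_upd: "map (h(n := B)) (zimin n) = map h (zimin n)"
    by (simp add: set_zimin)
  have "W = concat (map (h(n := B)) (zimin (Suc n)))"
    unfolding zimin.simps map_append concat_append map_upd using W by simp
  moreover have "\<forall>x\<in>{..<Suc n}. (h(n := B)) x \<noteq> []" using B ne by simp
  ultimately show "instance_of W (zimin (Suc n))"
    unfolding instance_of_iff_concat_map set_zimin by blast
qed

lemma encounters_append:
  assumes "encounters S V"
  shows "encounters (P @ S @ R) V"
proof -
  obtain T U U' where "S = U @ T @ U'" "instance_of T V"
    using assms unfolding encounters_def subword_def by blast
  then have "P @ S @ R = (P @ U) @ T @ (U' @ R)" "instance_of T V" by simp_all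
  then show ?thesis unfolding encounters_def subword_def by blast
qed

lemma subword_refl: "subword S S"
  unfolding subword_def by (intro exI[of _ "[]"]) simp

lemma instance_of_imp_encounters: "instance_of S V \<Longrightarrow> encounters S V"
  unfolding encounters_def using subword_refl by blast

lemma encounters_zimin_Suc:
  assumes "encounters X (zimin n)" "G \<noteq> []"
  shows "encounters (X @ G @ X) (zimin (Suc n))"
proof -
  obtain U S U' where X: "X = U @ S @ U'" and S: "instance_of S (zimin n)"
    using assms(1) unfolding encounters_def subword_def by blast
  have "U' @ G @ U \<noteq> []" using assms(2) by simp
  with S have "instance_of (S @ (U' @ G @ U) @ S) (zimin (Suc n))"
    unfolding instance_of_zimin_Suc_iff by blast
  then have "encounters (U @ (S @ (U' @ G @ U) @ S) @ U') (zimin (Suc n))"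
    by (intro encounters_append instance_of_imp_encounters)
  then show ?thesis using X by simp
qed

lemma not_encounters_Nil: "V \<noteq> [] \<Longrightarrow> \<not> encounters [] V"
  unfolding encounters_def subword_def by (auto dest: instance_of_length_le)

lemma split_at_two_occurrences:
  assumes "take m (drop a w) = X" "take m (drop b w) = X" "a + m < b" "b + m \<le> length w"
  shows "\<exists>P G R. w = P @ X @ G @ X @ R \<and> G \<noteq> []"
proof -
  have drop_split: "drop i w = take k (drop i w) @ drop (i + k) w" for i k
    using append_take_drop_id[of k "drop i w"] by (simp add: add.commute)
  define G where "G = take (b - (a + m)) (drop (a + m) w)"
  have "drop (a + m) w = G @ drop b w"
    using drop_split[of "a + m" "b - (a + m)"] assms(3) unfolding G_def by simp
  then have "drop a w = X @ G @ X @ drop (b + m) w"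
    using drop_split[of a m] drop_split[of b m] assms(1,2) by simp
  then have "w = take a w @ X @ G @ X @ drop (b + m) w"
    using append_take_drop_id[of a w] by simp
  moreover have "G \<noteq> []"
    using assms(3,4) unfolding G_def by simp
  ultimately show ?thesis by blast
qed

lemma long_qary_word_repeats_block:
  assumes "qary q w" "(q^m + 1) * (m + 1) \<le> length w"
  shows "\<exists>P X G R. w = P @ X @ G @ X @ R \<and> length X = m \<and> G \<noteq> []"
proof -
  define K where "K = q^m + 1"
  define block where "block i = take m (drop (i * (m + 1)) w)" for i
  have block_end: "i * (m + 1) + m < length w" if "i < K" for i
  proof -
    have "Suc i * (m + 1) \<le> K * (m + 1)" using that by (intro mult_le_mono1) simp
    then show ?thesis using assms(2) unfolding K_def by simp
  qed
  have block_length: "length (block i) = m" if "i < K" for i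
    using block_end[OF that] unfolding block_def by simp
  have "block i \<in> {xs. set xs \<subseteq> {..<q} \<and> length xs = m}" if "i < K" for i
  proof -
    have "set (block i) \<subseteq> set w"
      unfolding block_def by (meson order_trans set_take_subset set_drop_subset)
    with assms(1) block_length[OF that] show ?thesis unfolding qary_def by auto
  qed
  then have "card (block ` {..<K}) \<le> card {xs. set xs \<subseteq> {..<q} \<and> length xs = m}"
    by (intro card_mono finite_lists_length_eq) auto
  also have "\<dots> = q^m" by (simp add: card_lists_length_eq)
  finally have "\<not> inj_on block {..<K}"
    using card_image[of block "{..<K}"] unfolding K_def by auto
  then obtain i j where "i < K" "j < K" "i \<noteq> j" "block i = block j"
    unfolding inj_on_def by blast
  then obtain i j where ij: "i < j" "j < K" and same_block: "block i = block j"
    by (metis nat_neq_iff)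
  have "Suc i * (m + 1) \<le> j * (m + 1)" using ij(1) by (intro mult_le_mono1) simp
  then have "i * (m + 1) + m < j * (m + 1)" by simp
  moreover have "j * (m + 1) + m \<le> length w"
    using block_end[of j] ij by simp
  moreover have "take m (drop (i * (m + 1)) w) = block i" "take m (drop (j * (m + 1)) w) = block i"
    using same_block unfolding block_def by simp_all
  ultimately obtain P G R where "w = P @ block i @ G @ block i @ R" "G \<noteq> []"
    using split_at_two_occurrences by blast
  moreover have "length (block i) = m"
    using block_length ij by simp
  ultimately show ?thesis by blast
qed

lemma zimin_unavoidable: "\<exists>M. \<forall>w. qary q w \<and> length w = M \<longrightarrow> encounters w (zimin n)"
proof (induction n)
  case 0
  have "instance_of [] (zimin 0)" unfolding instance_of_iff_concat_map by simp
  then show ?case by (intro exI[of _ 0]) (auto intro: instance_of_imp_encounters)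
next
  case (Suc n)
  then obtain M where M: "\<And>w. qary q w \<Longrightarrow> length w = M \<Longrightarrow> encounters w (zimin n)" by blast
  show ?case
  proof (intro exI[of _ "(q^M + 1) * (M + 1)"] allI impI)
    fix w assume w: "qary q w \<and> length w = (q^M + 1) * (M + 1)"
    then obtain P X G R where w_eq: "w = P @ X @ G @ X @ R" and "length X = M" "G \<noteq> []"
      using long_qary_word_repeats_block[of q w M] by auto
    moreover have "qary q X" using w w_eq unfolding qary_def by auto
    ultimately have "encounters (X @ G @ X) (zimin (Suc n))"
      using M by (intro encounters_zimin_Suc) simp_all
    then show "encounters w (zimin (Suc n))"
      using encounters_append[of "X @ G @ X" _ P R] w_eq by simp
  qed
qed

lemma encounters_zimin_of_length_f: "qary q w \<Longrightarrow> length w = f n q \<Longrightarrow> encounters w (zimin n)"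
  using LeastI_ex[OF zimin_unavoidable] unfolding f_def by blast

lemma length_less_f_if_avoids:
  assumes "qary q w" "\<not> encounters w (zimin n)"
  shows "length w < f n q"
proof (rule ccontr)
  assume "\<not> length w < f n q"
  moreover have "qary q (take (f n q) w)"
    using assms(1) unfolding qary_def by (meson order_trans set_take_subset)
  ultimately have "encounters (take (f n q) w) (zimin n)"
    by (simp add: encounters_zimin_of_length_f)
  then have "encounters ([] @ take (f n q) w @ drop (f n q) w) (zimin n)"
    by (rule encounters_append)
  with assms(2) show False by simp
qed

definition qwords :: "nat \<Rightarrow> nat \<Rightarrow> nat list set" where
  "qwords q k = {w. qary q w \<and> length w = k}"

definition zimin_instances :: "nat \<Rightarrow> nat \<Rightarrow> nat \<Rightarrow> nat list set" where
  "zimin_instances n q k = {w \<in> qwords q k. instance_of w (zimin n)}"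

lemma finite_qwords: "finite (qwords q k)"
  unfolding qwords_def qary_def by (rule finite_lists_length_eq) simp

lemma card_qwords: "card (qwords q k) = q^k"
  unfolding qwords_def qary_def by (simp add: card_lists_length_eq)

lemma zimin_instances_subset_qwords: "zimin_instances n q k \<subseteq> qwords q k"
  unfolding zimin_instances_def by blast

lemma finite_zimin_instances: "finite (zimin_instances n q k)"
  using finite_subset[OF zimin_instances_subset_qwords finite_qwords] .

lemma zimin_instances_Suc_subset:
  "zimin_instances (Suc n) q k \<subseteq>
     (\<Union>a \<in> {a. 2^n - 1 \<le> a \<and> 2 * a < k}.
        (\<lambda>(A, B). A @ B @ A) ` (zimin_instances n q a \<times> qwords q (k - 2 * a)))"
proof
  fix w assume "w \<in> zimin_instances (Suc n) q k"
  then have w: "qary q w" "length w = k" "instance_of w (zimin (Suc n))"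
    unfolding zimin_instances_def qwords_def by auto
  then obtain A B where AB: "w = A @ B @ A" "B \<noteq> []" "instance_of A (zimin n)"
    unfolding instance_of_zimin_Suc_iff by blast
  have "2^n - 1 \<le> length A"
    using instance_of_length_le[OF AB(3)] by (simp add: length_zimin)
  moreover have "2 * length A < k"
  proof -
    have "length w = 2 * length A + length B" "length B \<noteq> 0" using AB(1,2) by simp_all
    then show ?thesis using w(2) by linarith
  qed
  moreover have "(A, B) \<in> zimin_instances n q (length A) \<times> qwords q (k - 2 * length A)"
    using w AB unfolding zimin_instances_def qwords_def qary_def by auto
  then have "w \<in> (\<lambda>(A, B). A @ B @ A) ` (zimin_instances n q (length A) \<times> qwords q (k - 2 * length A))"
    using AB(1) by (intro rev_image_eqI[of "(A, B)"]) simp_all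
  ultimately show "w \<in> (\<Union>a \<in> {a. 2^n - 1 \<le> a \<and> 2 * a < k}.
        (\<lambda>(A, B). A @ B @ A) ` (zimin_instances n q a \<times> qwords q (k - 2 * a)))"
    by (intro UN_I[of "length A"]) simp_all
qed

lemma card_zimin_instances_Suc_le:
  "card (zimin_instances (Suc n) q k) \<le>
     (\<Sum>a | 2^n - 1 \<le> a \<and> 2 * a < k. card (zimin_instances n q a) * q^(k - 2 * a))"
proof -
  let ?A = "{a. 2^n - 1 \<le> a \<and> 2 * a < k}"
  let ?F = "\<lambda>a. (\<lambda>(A, B). A @ B @ A) ` (zimin_instances n q a \<times> qwords q (k - 2 * a))"
  have fin: "finite ?A" by (rule finite_subset[of _ "{..<k}"]) auto
  have "card (zimin_instances (Suc n) q k) \<le> card (\<Union>a\<in>?A. ?F a)"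
    by (intro card_mono zimin_instances_Suc_subset finite_UN_I fin finite_imageI
        finite_cartesian_product finite_zimin_instances finite_qwords)
  also have "\<dots> \<le> (\<Sum>a\<in>?A. card (?F a))"
    by (rule card_UN_le[OF fin])
  also have "\<dots> \<le> (\<Sum>a\<in>?A. card (zimin_instances n q a) * q^(k - 2 * a))"
    by (intro sum_mono order.trans[OF card_image_le])
      (simp_all add: card_cartesian_product card_qwords finite_zimin_instances finite_qwords)
  finally show ?thesis .
qed

lemma sum_power_le_geometric:
  fixes x :: real
  assumes "finite A" "\<forall>a\<in>A. m \<le> a" "0 \<le> x" "x < 1"
  shows "(\<Sum>a\<in>A. x^a) \<le> x^m / (1 - x)"
proof -
  define N where "N = Max (insert m A)"
  have "A \<subseteq> {m..N}" "m \<le> N" using assms(1,2) unfolding N_def by auto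
  then have "(\<Sum>a\<in>A. x^a) \<le> (\<Sum>a = m..N. x^a)"
    using assms(3) by (intro sum_mono2) auto
  also have "\<dots> = (x^m - x^Suc N) / (1 - x)"
  proof -
    have "\<not> N < m" "x \<noteq> 1" using \<open>m \<le> N\<close> assms(4) by simp_all
    then show ?thesis by (simp only: sum_gp if_False)
  qed
  also have "\<dots> \<le> x^m / (1 - x)"
    using assms(3,4) by (intro divide_right_mono) auto
  finally show ?thesis .
qed

lemma sum_inverse_power_le:
  fixes q :: real
  assumes "2 \<le> q" "finite A" "\<forall>a\<in>A. m \<le> a"
  shows "(\<Sum>a\<in>A. (1 / q)^a) \<le> 2 * (1 / q)^m"
proof -
  define x where "x = 1 / q"
  have x: "0 \<le> x" "x \<le> 1 / 2" using assms(1) unfolding x_def by (auto simp: field_simps)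
  have "(\<Sum>a\<in>A. x^a) \<le> x^m / (1 - x)"
    using x assms(2,3) by (intro sum_power_le_geometric) simp_all
  also have "\<dots> \<le> 2 * x^m"
  proof -
    have "x * (2 * x^m) = (2 * x) * x^m" by simp
    also have "\<dots> \<le> 1 * x^m" using x by (intro mult_right_mono) simp_all
    finally show ?thesis using x by (simp add: field_simps)
  qed
  finally show ?thesis unfolding x_def .
qed

lemma card_zimin_instances_le:
  assumes "2 \<le> q"
  shows "real (card (zimin_instances (Suc n) q k)) \<le> 2^n * real q^k / real q^(2^(n+1) - (n+2))"
proof (induction n arbitrary: k)
  case 0
  have "card (zimin_instances (Suc 0) q k) \<le> q^k"
    using card_mono[OF finite_qwords zimin_instances_subset_qwords] by (simp add: card_qwords)
  then have "real (card (zimin_instances (Suc 0) q k)) \<le> real (q^k)"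
    by (rule of_nat_mono)
  then show ?case by simp
next
  case (Suc n)
  define m :: nat where "m = 2^Suc n - 1"
  define e :: nat where "e = 2^(n+1) - (n+2)"
  define A where "A = {a. 2^Suc n - 1 \<le> a \<and> 2 * a < k}"
  define x where "x = 1 / real q"
  have q: "0 < real q" using assms by simp
  have exponent: "2^(Suc n + 1) - (Suc n + 2) = e + m"
  proof -
    have "n < 2^n" by (rule less_exp)
    then show ?thesis unfolding e_def m_def by (simp; arith)
  qed
  have "real (card (zimin_instances (Suc (Suc n)) q k)) \<le>
      real (\<Sum>a\<in>A. card (zimin_instances (Suc n) q a) * q^(k - 2 * a))"
    using card_zimin_instances_Suc_le[of "Suc n" q k] unfolding A_def by (rule of_nat_mono)
  also have "\<dots> = (\<Sum>a\<in>A. real (card (zimin_instances (Suc n) q a)) * real q^(k - 2 * a))"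
    by simp
  also have "\<dots> \<le> (\<Sum>a\<in>A. 2^n * real q^a / real q^e * real q^(k - 2 * a))"
    using Suc.IH unfolding e_def by (intro sum_mono mult_right_mono) simp_all
  also have "\<dots> = 2^n * real q^k / real q^e * (\<Sum>a\<in>A. x^a)"
  proof -
    have "real q^a * real q^(k - 2 * a) = real q^k * x^a" if "a \<in> A" for a
    proof -
      have "k = a + (k - 2 * a) + a" using that unfolding A_def by simp
      then have "real q^k = real q^a * real q^(k - 2 * a) * real q^a"
        by (metis power_add)
      then show ?thesis using q unfolding x_def by (simp add: power_one_over)
    qed
    then show ?thesis by (simp add: sum_distrib_left mult.assoc mult.left_commute)
  qed
  also have "\<dots> \<le> 2^n * real q^k / real q^e * (2 * x^m)"
  proof (intro mult_left_mono)
    show "(\<Sum>a\<in>A. x^a) \<le> 2 * x^m"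
      unfolding x_def using assms
      by (intro sum_inverse_power_le finite_subset[of A "{..<k}"]) (auto simp: A_def m_def)
  qed simp
  also have "\<dots> = 2^Suc n * real q^k / real q^(e + m)"
    using q unfolding x_def by (simp add: power_add power_one_over)
  finally show ?case by (simp only: exponent)
qed

lemma card_words_with_zimin_instance_at_le:
  assumes "2 \<le> q" "p + k \<le> M"
  shows "real (card ((\<lambda>(U, S, U'). U @ S @ U') `
             (qwords q p \<times> zimin_instances (Suc n) q k \<times> qwords q (M - p - k))))
           \<le> 2^n * real q^M / real q^(2^(n+1) - (n+2))"
proof -
  define e :: nat where "e = 2^(n+1) - (n+2)"
  have "card ((\<lambda>(U, S, U'). U @ S @ U') `
            (qwords q p \<times> zimin_instances (Suc n) q k \<times> qwords q (M - p - k)))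
          \<le> q^p * card (zimin_instances (Suc n) q k) * q^(M - p - k)"
    by (rule order.trans[OF card_image_le])
      (simp_all add: card_cartesian_product card_qwords finite_qwords finite_zimin_instances)
  then have "real (card ((\<lambda>(U, S, U'). U @ S @ U') `
            (qwords q p \<times> zimin_instances (Suc n) q k \<times> qwords q (M - p - k))))
          \<le> real (q^p * card (zimin_instances (Suc n) q k) * q^(M - p - k))"
    by (rule of_nat_mono)
  also have "\<dots> = real q^p * real (card (zimin_instances (Suc n) q k)) * real q^(M - p - k)"
    by simp
  also have "\<dots> \<le> real q^p * (2^n * real q^k / real q^e) * real q^(M - p - k)"
    using card_zimin_instances_le[OF assms(1)] unfolding e_def
    by (intro mult_left_mono mult_right_mono) simp_all
  also have "\<dots> = 2^n * real q^(p + k + (M - p - k)) / real q^e"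
    by (simp add: power_add)
  also have "\<dots> = 2^n * real q^M / real q^e"
    using assms(2) by simp
  finally show ?thesis unfolding e_def .
qed

lemma card_encountering_zimin_le:
  assumes "2 \<le> q"
  shows "real (card {w \<in> qwords q M. encounters w (zimin (Suc n))}) \<le>
           real ((M + 1)^2) * 2^n * real q^M / real q^(2^(n+1) - (n+2))"
proof -
  define E where "E = {w \<in> qwords q M. encounters w (zimin (Suc n))}"
  define P :: "(nat \<times> nat) set" where "P = {(p, k). p + k \<le> M}"
  define F where "F = (\<lambda>(p, k). (\<lambda>(U, S, U'). U @ S @ U') `
                         (qwords q p \<times> zimin_instances (Suc n) q k \<times> qwords q (M - p - k)))"
  have P_subset: "P \<subseteq> {..M} \<times> {..M}" unfolding P_def by auto
  then have finite_P: "finite P" by (rule finite_subset) simp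
  have "card P \<le> card ({..M} \<times> {..M})" using P_subset by (intro card_mono) simp_all
  then have card_P: "card P \<le> (M + 1)^2" by (simp add: card_cartesian_product power2_eq_square)
  have finite_F: "finite (F pk)" for pk
    unfolding F_def by (simp add: case_prod_beta finite_qwords finite_zimin_instances)
  have "E \<subseteq> (\<Union>pk\<in>P. F pk)"
  proof
    fix w assume "w \<in> E"
    then obtain U S U' where w: "w = U @ S @ U'" "instance_of S (zimin (Suc n))"
      and "qary q w" "length w = M"
      unfolding E_def qwords_def encounters_def subword_def by blast
    then have "(U, S, U') \<in> qwords q (length U) \<times> zimin_instances (Suc n) q (length S) \<times>
                             qwords q (M - length U - length S)"
      unfolding zimin_instances_def qwords_def qary_def by auto
    then have "w \<in> F (length U, length S)"
      unfolding F_def using w(1) by (simp add: rev_image_eqI[of "(U, S, U')"])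
    moreover have "(length U, length S) \<in> P"
      unfolding P_def using \<open>length w = M\<close> w(1) by simp
    ultimately show "w \<in> (\<Union>pk\<in>P. F pk)" by (intro UN_I)
  qed
  then have "real (card E) \<le> real (card (\<Union>pk\<in>P. F pk))"
    using finite_P finite_F by (intro of_nat_mono card_mono) simp_all
  also have "\<dots> \<le> real (\<Sum>pk\<in>P. card (F pk))"
    by (intro of_nat_mono card_UN_le finite_P)
  also have "\<dots> \<le> (\<Sum>pk\<in>P. 2^n * real q^M / real q^(2^(n+1) - (n+2)))"
    unfolding of_nat_sum
  proof (intro sum_mono)
    fix pk assume "pk \<in> P"
    then obtain p k where "pk = (p, k)" "p + k \<le> M" unfolding P_def by blast
    then show "real (card (F pk)) \<le> 2^n * real q^M / real q^(2^(n+1) - (n+2))"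
      unfolding F_def using card_words_with_zimin_instance_at_le[OF assms] by simp
  qed
  also have "\<dots> = real (card P) * (2^n * real q^M / real q^(2^(n+1) - (n+2)))"
    by simp
  also have "\<dots> \<le> real ((M + 1)^2) * (2^n * real q^M / real q^(2^(n+1) - (n+2)))"
    using card_P by (intro mult_right_mono of_nat_mono) simp_all
  finally show ?thesis unfolding E_def by simp
qed

lemma f_Suc_gt:
  assumes "2 \<le> q" "(M + 1)^2 * 2^n < q^(2^(n+1) - (n+2))"
  shows "M < f (Suc n) q"
proof -
  define e :: nat where "e = 2^(n+1) - (n+2)"
  have "\<exists>w \<in> qwords q M. \<not> encounters w (zimin (Suc n))"
  proof (rule ccontr)
    assume "\<not> ?thesis"
    then have "{w \<in> qwords q M. encounters w (zimin (Suc n))} = qwords q M" by blast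
    then have "real q^M \<le> real ((M + 1)^2) * 2^n * real q^M / real q^e"
      using card_encountering_zimin_le[OF assms(1), of M n] unfolding e_def by (simp add: card_qwords)
    moreover have "real ((M + 1)^2 * 2^n) < real (q^e)"
      using assms(2) unfolding e_def by (simp only: of_nat_less_iff)
    moreover have "0 < real q" using assms(1) by simp
    ultimately show False by (simp add: field_simps)
  qed
  then obtain w where "qary q w" "length w = M" "\<not> encounters w (zimin (Suc n))"
    unfolding qwords_def by blast
  then show ?thesis using length_less_f_if_avoids[of q w] by simp
qed

lemma f_Suc_ge_powr:
  assumes "2 \<le> q"
  shows "real q powr (2^k - (real k + 2)) \<le> real (f (Suc k) q)"
proof (cases "k + 2 \<le> 2^k")
  case True
  define t where "t = 2^k - (k + 2)"
  have "(q^t - 1 + 1)^2 * 2^k = q^(2 * t) * 2^k"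
    using assms by (simp add: power_mult[symmetric] mult.commute)
  also have "\<dots> < q^(2 * t) * q^(k + 2)"
  proof (intro mult_strict_left_mono)
    have "(2::nat)^k < 2^(k + 2)" by simp
    also have "\<dots> \<le> q^(k + 2)" using assms by (intro power_mono) simp_all
    finally show "2^k < q^(k + 2)" .
  qed (use assms in simp)
  also have "\<dots> = q^(2^(k+1) - (k+2))"
  proof -
    have "2 * t + (k + 2) = 2^(k+1) - (k+2)" using True unfolding t_def by simp
    then show ?thesis by (simp only: power_add[symmetric])
  qed
  finally have "q^t - 1 < f (Suc k) q"
    by (rule f_Suc_gt[OF assms])
  then have "q^t \<le> f (Suc k) q" by linarith
  moreover have "real q powr (2^k - (real k + 2)) = real (q^t)"
  proof -
    have "2^k - (real k + 2) = real t" using True unfolding t_def by (simp add: of_nat_diff)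
    then show ?thesis using assms by (simp add: powr_realpow)
  qed
  ultimately show ?thesis by simp
next
  case False
  have "real (2^k) \<le> real (k + 2)" using False by (intro of_nat_mono) simp
  then have "real q powr (2^k - (real k + 2)) \<le> real q powr 0"
    using assms by (intro powr_mono) simp_all
  also have "\<dots> = 1" using assms by simp
  also have "1 \<le> real (f (Suc k) q)"
  proof -
    have "\<not> encounters [] (zimin (Suc k))" by (rule not_encounters_Nil) simp
    then have "length ([] :: nat list) < f (Suc k) q"
      by (intro length_less_f_if_avoids) (simp_all add: qary_def)
    then show ?thesis by simp
  qed
  finally show ?thesis by simp
qed

theorem mainTheorem2:
  shows "\<exists>\<epsilon> :: nat \<Rightarrow> nat \<Rightarrow> real.
           ((\<lambda>(n, q). \<epsilon> n q) \<longlongrightarrow> 0) (at_top \<times>\<^sub>F at_top) \<and>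
           (\<forall>n q. n \<ge> 1 \<longrightarrow> q \<ge> 2 \<longrightarrow>
              real (f n q) \<ge> real q powr (2 ^ (n - 1) * (1 + \<epsilon> n q)))"
proof (intro exI[of _ "\<lambda>n q. - 2 * (real n + 1) / 2^n"] conjI allI impI)
  have "(\<lambda>n. - 2 * (real n + 1) / 2^n) \<longlonglongrightarrow> 0" by real_asymp
  then have "((\<lambda>nq. - 2 * (real (fst nq) + 1) / 2^fst nq) \<longlongrightarrow> 0) (at_top \<times>\<^sub>F (at_top :: nat filter))"
    by (rule filterlim_compose) (simp add: filterlim_def filtermap_fst_prod_filter)
  then show "((\<lambda>(n, q::nat). - 2 * (real n + 1) / 2^n) \<longlongrightarrow> 0) (at_top \<times>\<^sub>F at_top)"
    by (simp add: case_prod_beta')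
next
  fix n q :: nat assume "1 \<le> n" "2 \<le> q"
  define k where "k = n - 1"
  have n: "n = Suc k" using \<open>1 \<le> n\<close> unfolding k_def by simp
  have "2 ^ (n - 1) * (1 + - 2 * (real n + 1) / 2^n) = 2^k - (real k + 2)"
    unfolding n by (simp add: field_simps)
  then show "real q powr (2 ^ (n - 1) * (1 + - 2 * (real n + 1) / 2^n)) \<le> real (f n q)"
    using f_Suc_ge_powr[OF \<open>2 \<le> q\<close>, of k] n by simp
qed

end
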